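(* Let $g:\mathbb{R}^m\to\mathbb{R}$ be $\gamma_z$-strongly convex for some $\gamma_z\geq0$, and let $\mathcal{D}(\cdot)$ be a location-scale family on a convex set $\Theta\subseteq\mathbb{R}^d$, $z_\theta\sim\mathcal{D}(\theta)\iff z_\theta\overset{d}{=}(\Sigma_0+\Sigma(\theta))z_0+\mu_0+\mu\theta$. Then for all $\theta,\theta'\in\Theta$ and $\alpha\in(0,1)$, $$\mathbb{E}_{z\sim\mathcal{D}(\alpha\theta+(1-\alpha)\theta')}[g(z)]\leq\mathbb{E}_{z\sim\alpha\mathcal{D}(\theta)+(1-\alpha)\mathcal{D}(\theta')}[g(z)]-\frac{\alpha(1-\alpha)\gamma_z}{2}\mathbb{E}_{z_0\sim\mathcal{D}_0}\|\Sigma(\theta-\theta')z_0+\mu(\theta-\theta')\|_2^2.$$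
   Context: Location-scale family: $z_0\sim\mathcal{D}_0$ is drawn from a fixed zero-mean distribution $\mathcal{D}_0$ on $\mathbb{R}^m$, $\Sigma_0\in\mathbb{R}^{m\times m}$, $\mu_0\in\mathbb{R}^m$ fixed, $\mu:\mathbb{R}^d\to\mathbb{R}^m$ and $\Sigma:\mathbb{R}^d\to\mathbb{R}^{m\times m}$ linear maps. $g$ is $\gamma_z$-strongly convex if $g(z)-\frac{\gamma_z}{2}\|z\|_2^2$ is convex. $\alpha\mathcal{D}(\theta)+(1-\alpha)\mathcal{D}(\theta')$ denotes the mixture distribution. *)

theory Defs
  imports "HOL-Probability.Probability"
begin

definition strongly_convex :: "real \<Rightarrow> ('a::real_normed_vector \<Rightarrow> real) \<Rightarrow> bool" where
  "strongly_convex \<gamma> g \<longleftrightarrow> convex_on UNIV (\<lambda>z. g z - \<gamma> / 2 * (norm z)\<^sup>2)"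

definition loc_scale ::
  "(real^'m) measure \<Rightarrow> real^'m^'m \<Rightarrow> (real^'d \<Rightarrow> real^'m^'m) \<Rightarrow> real^'m
     \<Rightarrow> (real^'d \<Rightarrow> real^'m) \<Rightarrow> real^'d \<Rightarrow> (real^'m) measure" where
  "loc_scale D0 \<Sigma>0 \<Sigma> \<mu>0 \<mu> \<theta> =
     distr D0 borel (\<lambda>z. (\<Sigma>0 + \<Sigma> \<theta>) *v z + \<mu>0 + \<mu> \<theta>)"

definition mixture :: "real \<Rightarrow> 'a measure \<Rightarrow> 'a measure \<Rightarrow> 'a measure" where
  "mixture \<alpha> M N = measure_of (space M) (sets M)
      (\<lambda>A. ennreal \<alpha> * emeasure M A + ennreal (1 - \<alpha>) * emeasure N A)"

end

theory Submission
  imports Defs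
begin

text \<open>Every law \<open>D(\<theta>)\<close> is the image of \<open>D0\<close> under
  \<open>T\<^sub>\<theta> z = (\<Sigma>0 + \<Sigma> \<theta>) z + \<mu>0 + \<mu> \<theta>\<close>, which is affine in \<open>\<theta>\<close>. So, as functions of \<open>z0\<close>,
  the variable for the mixed parameter is the convex combination of \<open>T\<^sub>\<theta> z0\<close> and
  \<open>T\<^sub>\<theta>\<^sub>' z0\<close>, which differ by \<open>\<Sigma>(\<theta> - \<theta>') z0 + \<mu>(\<theta> - \<theta>')\<close>. Strong convexity of \<open>g\<close>
  applied pointwise and integrated against \<open>D0\<close> gives the inequality, since integrating
  against a mixture gives the convex combination of the two integrals.\<close>

lemma measurable_if_subprob_algebra:
  assumes "prob_space M" "prob_space N" "sets N = sets M"
  shows "(\<lambda>b. if b then M else N) \<in> measurable (measure_pmf p) (subprob_algebra M)"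
  using assms by (auto simp: measurable_def space_subprob_algebra prob_space_imp_subprob_space)

lemma mixture_eq_bind:
  assumes M: "prob_space M" and N: "prob_space N" and sets_eq: "sets N = sets M"
    and "0 \<le> a" "a \<le> 1"
  shows "mixture a M N = measure_pmf (bernoulli_pmf a) \<bind> (\<lambda>b. if b then M else N)"
    (is "_ = ?B")
proof -
  note kernel = measurable_if_subprob_algebra[OF M N sets_eq, of "bernoulli_pmf a"]
  have sets_B: "sets ?B = sets M"
    by (rule sets_bind) (use sets_eq in auto)
  have emeasure_B: "emeasure ?B A = ennreal a * emeasure M A + ennreal (1 - a) * emeasure N A"
    if "A \<in> sets M" for A
    using \<open>0 \<le> a\<close> \<open>a \<le> 1\<close>
    by (subst emeasure_bind[OF _ kernel that], simp, subst nn_integral_measure_pmf_support[of UNIV])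
       (auto simp: UNIV_bool mult.commute)
  have "mixture a M N = measure_of (space ?B) (sets ?B) (emeasure ?B)"
    unfolding mixture_def sets_eq_imp_space_eq[OF sets_B] sets_B
    by (rule measure_of_eq) (auto simp: emeasure_B sets.space_closed sets.sigma_sets_eq)
  then show ?thesis
    by (simp add: measure_of_of_measure)
qed

lemma sets_mixture:
  assumes "prob_space M" "prob_space N" "sets N = sets M" "0 \<le> a" "a \<le> 1"
  shows "sets (mixture a M N) = sets M"
  unfolding mixture_eq_bind[OF assms] by (rule sets_bind) (use assms(3) in auto)

lemma nn_integral_mixture:
  assumes M: "prob_space M" and N: "prob_space N" and sets_eq: "sets N = sets M"
    and "0 \<le> a" "a \<le> 1" and h: "h \<in> borel_measurable M"
  shows "(\<integral>\<^sup>+x. h x \<partial>mixture a M N)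
    = ennreal a * (\<integral>\<^sup>+x. h x \<partial>M) + ennreal (1 - a) * (\<integral>\<^sup>+x. h x \<partial>N)"
proof -
  note kernel = measurable_if_subprob_algebra[OF M N sets_eq, of "bernoulli_pmf a"]
  show ?thesis
    unfolding mixture_eq_bind[OF M N sets_eq \<open>0 \<le> a\<close> \<open>a \<le> 1\<close>] nn_integral_bind[OF h kernel]
    using \<open>0 \<le> a\<close> \<open>a \<le> 1\<close>
    by (subst nn_integral_measure_pmf_support[of UNIV]) (auto simp: UNIV_bool mult.commute)
qed

lemma integrable_mixture:
  fixes f :: "'a \<Rightarrow> 'b::{banach, second_countable_topology}"
  assumes M: "prob_space M" and N: "prob_space N" and sets_eq: "sets N = sets M"
    and a: "0 \<le> a" "a \<le> 1" and fM: "integrable M f" and fN: "integrable N f"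
  shows "integrable (mixture a M N) f"
proof -
  have "f \<in> borel_measurable M"
    using fM by auto
  then have "(\<integral>\<^sup>+x. norm (f x) \<partial>mixture a M N) < \<infinity>"
    using fM fN by (subst nn_integral_mixture[OF M N sets_eq a])
      (auto simp: integrable_iff_bounded ennreal_mult_less_top)
  moreover have "f \<in> borel_measurable (mixture a M N)"
    using fM by (simp add: measurable_cong_sets[OF sets_mixture[OF M N sets_eq a] refl])
  ultimately show ?thesis
    by (simp add: integrable_iff_bounded)
qed

lemma integral_mixture:
  fixes f :: "'a \<Rightarrow> real"
  assumes M: "prob_space M" and N: "prob_space N" and sets_eq: "sets N = sets M"
    and a: "0 \<le> a" "a \<le> 1" and fM: "integrable M f" and fN: "integrable N f"
  shows "(\<integral>x. f x \<partial>mixture a M N) = a * (\<integral>x. f x \<partial>M) + (1 - a) * (\<integral>x. f x \<partial>N)"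
proof -
  have f: "f \<in> borel_measurable M"
    using fM by auto
  have finite: "(\<integral>\<^sup>+x. ennreal (f x) \<partial>K) < \<infinity>" "(\<integral>\<^sup>+x. ennreal (- f x) \<partial>K) < \<infinity>"
    if "integrable K f" for K
    using that by (simp_all add: real_integrable_def top.not_eq_extremum)
  have positive_part: "(\<integral>\<^sup>+x. ennreal (f x) \<partial>mixture a M N)
      = ennreal a * (\<integral>\<^sup>+x. ennreal (f x) \<partial>M) + ennreal (1 - a) * (\<integral>\<^sup>+x. ennreal (f x) \<partial>N)"
    by (rule nn_integral_mixture[OF M N sets_eq a]) (use f in auto)
  have negative_part: "(\<integral>\<^sup>+x. ennreal (- f x) \<partial>mixture a M N)
      = ennreal a * (\<integral>\<^sup>+x. ennreal (- f x) \<partial>M) + ennreal (1 - a) * (\<integral>\<^sup>+x. ennreal (- f x) \<partial>N)"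
    by (rule nn_integral_mixture[OF M N sets_eq a]) (use f in auto)
  show ?thesis
    unfolding real_lebesgue_integral_def[OF integrable_mixture[OF M N sets_eq a fM fN]]
      real_lebesgue_integral_def[OF fM] real_lebesgue_integral_def[OF fN]
      positive_part negative_part
    using finite[OF fM] finite[OF fN] a
    by (simp add: enn2real_plus ennreal_mult_less_top enn2real_mult algebra_simps)
qed

lemma norm_convex_combination_squared:
  fixes x y :: "'a::real_inner"
  shows "(norm (a *\<^sub>R x + (1 - a) *\<^sub>R y))\<^sup>2
    = a * (norm x)\<^sup>2 + (1 - a) * (norm y)\<^sup>2 - a * (1 - a) * (norm (x - y))\<^sup>2"
  unfolding power2_norm_eq_inner
  by (simp add: inner_add_left inner_add_right inner_diff_left inner_diff_right
      inner_commute algebra_simps)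

lemma strongly_convexD:
  fixes g :: "'a::real_inner \<Rightarrow> real"
  assumes "strongly_convex \<gamma> g" "0 \<le> a" "a \<le> 1"
  shows "g (a *\<^sub>R x + (1 - a) *\<^sub>R y)
    \<le> a * g x + (1 - a) * g y - a * (1 - a) * \<gamma> / 2 * (norm (x - y))\<^sup>2"
proof -
  have "convex_on UNIV (\<lambda>z. g z - \<gamma> / 2 * (norm z)\<^sup>2)"
    using assms(1) unfolding strongly_convex_def .
  from convex_onD[OF this, of "1 - a" x y] assms(2,3)
  have "g (a *\<^sub>R x + (1 - a) *\<^sub>R y) - \<gamma> / 2 * (norm (a *\<^sub>R x + (1 - a) *\<^sub>R y))\<^sup>2
      \<le> a * (g x - \<gamma> / 2 * (norm x)\<^sup>2) + (1 - a) * (g y - \<gamma> / 2 * (norm y)\<^sup>2)"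
    by simp
  then have "g (a *\<^sub>R x + (1 - a) *\<^sub>R y) \<le> a * g x + (1 - a) * g y
      - \<gamma> / 2 * (a * (norm x)\<^sup>2 + (1 - a) * (norm y)\<^sup>2 - (norm (a *\<^sub>R x + (1 - a) *\<^sub>R y))\<^sup>2)"
    by argo
  also have "\<dots> = a * g x + (1 - a) * g y - a * (1 - a) * \<gamma> / 2 * (norm (x - y))\<^sup>2"
    unfolding norm_convex_combination_squared by (simp add: field_simps)
  finally show ?thesis .
qed

lemma integral_strongly_convex_combination_le:
  fixes g :: "'b::{real_inner, second_countable_topology} \<Rightarrow> real" and X Y :: "'a \<Rightarrow> 'b"
  assumes g: "strongly_convex \<gamma> g" and "0 \<le> \<gamma>" and a: "0 \<le> a" "a \<le> 1"
    and X: "X \<in> borel_measurable M" and Y: "Y \<in> borel_measurable M"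
    and gX: "integrable M (\<lambda>z. g (X z))" and gY: "integrable M (\<lambda>z. g (Y z))"
    and gXY: "integrable M (\<lambda>z. g (a *\<^sub>R X z + (1 - a) *\<^sub>R Y z))"
  shows "(\<integral>z. g (a *\<^sub>R X z + (1 - a) *\<^sub>R Y z) \<partial>M)
    \<le> a * (\<integral>z. g (X z) \<partial>M) + (1 - a) * (\<integral>z. g (Y z) \<partial>M)
       - a * (1 - a) * \<gamma> / 2 * (\<integral>z. (norm (X z - Y z))\<^sup>2 \<partial>M)"
proof -
  define c where "c = a * (1 - a) * \<gamma> / 2"
  define gap where "gap z = a * g (X z) + (1 - a) * g (Y z) - g (a *\<^sub>R X z + (1 - a) *\<^sub>R Y z)" for z
  define penalty where "penalty z = c * (norm (X z - Y z))\<^sup>2" for z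
  have penalty_le_gap: "penalty z \<le> gap z" for z
    using strongly_convexD[OF g a, of "X z" "Y z"] unfolding penalty_def gap_def c_def by linarith
  have "0 \<le> c"
    unfolding c_def using \<open>0 \<le> \<gamma>\<close> a by simp
  have gap_integrable: "integrable M gap"
    unfolding gap_def using gX gY gXY by auto
  \<comment> \<open>The squared distance need not be integrable a priori; the penalty is, being
    dominated by the gap (this is where \<open>0 \<le> \<gamma>\<close> is used).\<close>
  have penalty_integrable: "integrable M penalty"
  proof (rule Bochner_Integration.integrable_bound[OF gap_integrable])
    show "penalty \<in> borel_measurable M"
      unfolding penalty_def using X Y by measurable
    show "AE z in M. norm (penalty z) \<le> norm (gap z)"
      using penalty_le_gap \<open>0 \<le> c\<close> order_trans[OF _ penalty_le_gap]
      by (intro AE_I2) (simp add: penalty_def)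
  qed
  have "c * (\<integral>z. (norm (X z - Y z))\<^sup>2 \<partial>M) = (\<integral>z. penalty z \<partial>M)"
    unfolding penalty_def by simp
  also have "\<dots> \<le> (\<integral>z. gap z \<partial>M)"
    by (rule integral_mono[OF penalty_integrable gap_integrable penalty_le_gap])
  also have "\<dots> = a * (\<integral>z. g (X z) \<partial>M) + (1 - a) * (\<integral>z. g (Y z) \<partial>M)
      - (\<integral>z. g (a *\<^sub>R X z + (1 - a) *\<^sub>R Y z) \<partial>M)"
    unfolding gap_def using gX gY gXY by simp
  finally show ?thesis
    unfolding c_def by simp
qed

definition loc_scale_map ::
  "real^'m^'m \<Rightarrow> (real^'d \<Rightarrow> real^'m^'m) \<Rightarrow> real^'m \<Rightarrow> (real^'d \<Rightarrow> real^'m)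
     \<Rightarrow> real^'d \<Rightarrow> real^'m \<Rightarrow> real^'m" where
  "loc_scale_map \<Sigma>0 \<Sigma> \<mu>0 \<mu> \<theta> z = (\<Sigma>0 + \<Sigma> \<theta>) *v z + \<mu>0 + \<mu> \<theta>"

lemma loc_scale_eq_distr:
  "loc_scale D0 \<Sigma>0 \<Sigma> \<mu>0 \<mu> \<theta> = distr D0 borel (loc_scale_map \<Sigma>0 \<Sigma> \<mu>0 \<mu> \<theta>)"
  unfolding loc_scale_def loc_scale_map_def ..

lemma borel_measurable_loc_scale_map:
  assumes "sets D0 = sets borel"
  shows "loc_scale_map \<Sigma>0 \<Sigma> \<mu>0 \<mu> \<theta> \<in> borel_measurable D0"
proof -
  have "continuous_on UNIV (loc_scale_map \<Sigma>0 \<Sigma> \<mu>0 \<mu> \<theta>)"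
    unfolding loc_scale_map_def
    by (intro continuous_intros linear_continuous_on linear_linear[THEN iffD1] matrix_vector_mul_linear)
  then show ?thesis
    by (simp add: measurable_cong_sets[OF assms refl] borel_measurable_continuous_onI)
qed

lemma loc_scale_map_convex_combination:
  assumes "linear \<Sigma>" "linear \<mu>"
  shows "loc_scale_map \<Sigma>0 \<Sigma> \<mu>0 \<mu> (a *\<^sub>R \<theta> + (1 - a) *\<^sub>R \<theta>') z
    = a *\<^sub>R loc_scale_map \<Sigma>0 \<Sigma> \<mu>0 \<mu> \<theta> z + (1 - a) *\<^sub>R loc_scale_map \<Sigma>0 \<Sigma> \<mu>0 \<mu> \<theta>' z"
  unfolding loc_scale_map_def linear_add[OF assms(1)] linear_add[OF assms(2)]
    linear_cmul[OF assms(1)] linear_cmul[OF assms(2)]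
  by (simp add: matrix_vector_mult_add_rdistrib scaleR_matrix_vector_assoc algebra_simps)

lemma loc_scale_map_diff:
  assumes "linear \<Sigma>" "linear \<mu>"
  shows "loc_scale_map \<Sigma>0 \<Sigma> \<mu>0 \<mu> \<theta> z - loc_scale_map \<Sigma>0 \<Sigma> \<mu>0 \<mu> \<theta>' z
    = \<Sigma> (\<theta> - \<theta>') *v z + \<mu> (\<theta> - \<theta>')"
  unfolding loc_scale_map_def linear_diff[OF assms(1)] linear_diff[OF assms(2)]
  by (simp add: matrix_vector_mult_add_rdistrib matrix_vector_mult_diff_rdistrib algebra_simps)

lemma sets_loc_scale: "sets (loc_scale D0 \<Sigma>0 \<Sigma> \<mu>0 \<mu> \<theta>) = sets borel"
  by (simp add: loc_scale_eq_distr)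

lemma prob_space_loc_scale:
  assumes "prob_space D0" "sets D0 = sets borel"
  shows "prob_space (loc_scale D0 \<Sigma>0 \<Sigma> \<mu>0 \<mu> \<theta>)"
  unfolding loc_scale_eq_distr
  by (rule prob_space.prob_space_distr[OF assms(1) borel_measurable_loc_scale_map[OF assms(2)]])

lemma integrable_loc_scale_iff:
  fixes g :: "real^'m \<Rightarrow> 'b::{banach, second_countable_topology}"
  assumes "sets D0 = sets borel" "g \<in> borel_measurable borel"
  shows "integrable (loc_scale D0 \<Sigma>0 \<Sigma> \<mu>0 \<mu> \<theta>) g
    \<longleftrightarrow> integrable D0 (\<lambda>z. g (loc_scale_map \<Sigma>0 \<Sigma> \<mu>0 \<mu> \<theta> z))"
  unfolding loc_scale_eq_distr
  by (rule integrable_distr_eq[OF borel_measurable_loc_scale_map[OF assms(1)] assms(2)])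

lemma integral_loc_scale:
  fixes g :: "real^'m \<Rightarrow> 'b::{banach, second_countable_topology}"
  assumes "sets D0 = sets borel" "g \<in> borel_measurable borel"
  shows "(\<integral>z. g z \<partial>loc_scale D0 \<Sigma>0 \<Sigma> \<mu>0 \<mu> \<theta>)
    = (\<integral>z. g (loc_scale_map \<Sigma>0 \<Sigma> \<mu>0 \<mu> \<theta> z) \<partial>D0)"
  unfolding loc_scale_eq_distr
  by (rule integral_distr[OF borel_measurable_loc_scale_map[OF assms(1)] assms(2)])

theorem propositionA2:
  fixes g :: "real^'m \<Rightarrow> real" and \<gamma>z :: real
    and D0 :: "(real^'m) measure"
    and \<Sigma>0 :: "real^'m^'m" and \<Sigma> :: "real^'d \<Rightarrow> real^'m^'m"
    and \<mu>0 :: "real^'m" and \<mu> :: "real^'d \<Rightarrow> real^'m"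
    and \<Theta> :: "(real^'d) set" and \<theta> \<theta>' :: "real^'d" and \<alpha> :: real
  assumes "\<gamma>z \<ge> 0" and "strongly_convex \<gamma>z g"
    and "prob_space D0" and "sets D0 = sets borel"
    and "integrable D0 (\<lambda>z. z)" and "(\<integral>z. z \<partial>D0) = 0"
    and "linear \<Sigma>" and "linear \<mu>"
    and "convex \<Theta>" and "\<theta> \<in> \<Theta>" and "\<theta>' \<in> \<Theta>"
    and "0 < \<alpha>" and "\<alpha> < 1"
    and "integrable D0 (\<lambda>z. (norm z)\<^sup>2)"
    and "integrable (loc_scale D0 \<Sigma>0 \<Sigma> \<mu>0 \<mu> \<theta>) g"
    and "integrable (loc_scale D0 \<Sigma>0 \<Sigma> \<mu>0 \<mu> \<theta>') g"
    and "integrable (loc_scale D0 \<Sigma>0 \<Sigma> \<mu>0 \<mu> (\<alpha> *\<^sub>R \<theta> + (1 - \<alpha>) *\<^sub>R \<theta>')) g"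
  shows "(\<integral>z. g z \<partial>(loc_scale D0 \<Sigma>0 \<Sigma> \<mu>0 \<mu> (\<alpha> *\<^sub>R \<theta> + (1 - \<alpha>) *\<^sub>R \<theta>')))
     \<le> (\<integral>z. g z \<partial>(mixture \<alpha> (loc_scale D0 \<Sigma>0 \<Sigma> \<mu>0 \<mu> \<theta>) (loc_scale D0 \<Sigma>0 \<Sigma> \<mu>0 \<mu> \<theta>')))
        - \<alpha> * (1 - \<alpha>) * \<gamma>z / 2
          * (\<integral>z0. (norm (\<Sigma> (\<theta> - \<theta>') *v z0 + \<mu> (\<theta> - \<theta>')))\<^sup>2 \<partial>D0)"
proof -
  let ?D = "loc_scale D0 \<Sigma>0 \<Sigma> \<mu>0 \<mu>" and ?T = "loc_scale_map \<Sigma>0 \<Sigma> \<mu>0 \<mu>"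
  have g: "g \<in> borel_measurable borel"
    using borel_measurable_integrable[OF assms(15)]
    by (simp add: measurable_cong_sets[OF sets_loc_scale refl])
  note integrable_pullback = integrable_loc_scale_iff[OF assms(4) g, THEN iffD1]
  note pullback = integral_loc_scale[OF assms(4) g]
  have "(\<integral>z. g z \<partial>?D (\<alpha> *\<^sub>R \<theta> + (1 - \<alpha>) *\<^sub>R \<theta>'))
      = (\<integral>z. g (\<alpha> *\<^sub>R ?T \<theta> z + (1 - \<alpha>) *\<^sub>R ?T \<theta>' z) \<partial>D0)"
    by (simp add: pullback loc_scale_map_convex_combination[OF assms(7,8)])
  also have "\<dots> \<le> \<alpha> * (\<integral>z. g (?T \<theta> z) \<partial>D0) + (1 - \<alpha>) * (\<integral>z. g (?T \<theta>' z) \<partial>D0)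
      - \<alpha> * (1 - \<alpha>) * \<gamma>z / 2 * (\<integral>z. (norm (?T \<theta> z - ?T \<theta>' z))\<^sup>2 \<partial>D0)"
    using integrable_pullback[OF assms(17)] assms(12,13)
    by (intro integral_strongly_convex_combination_le[OF assms(2,1)] borel_measurable_loc_scale_map
        integrable_pullback assms(4,15,16)) (simp_all add: loc_scale_map_convex_combination[OF assms(7,8)])
  also have "\<dots> = (\<integral>z. g z \<partial>mixture \<alpha> (?D \<theta>) (?D \<theta>'))
      - \<alpha> * (1 - \<alpha>) * \<gamma>z / 2 * (\<integral>z0. (norm (\<Sigma> (\<theta> - \<theta>') *v z0 + \<mu> (\<theta> - \<theta>')))\<^sup>2 \<partial>D0)"
    using assms(12,13)
    by (simp add: integral_mixture[OF prob_space_loc_scale[OF assms(3,4)]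
        prob_space_loc_scale[OF assms(3,4)] _ _ _ assms(15,16)]
        sets_loc_scale pullback loc_scale_map_diff[OF assms(7,8)])
  finally show ?thesis .
qed

end
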